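(* Let $F$ be a continuous distribution function with a density that is symmetric about $\theta_0$ and unimodal (so $\theta_0 = F^{-1}(1/2)$). Fix $0 < \alpha < 1$ and $0 \le \varepsilon < 1/2$, let $k_n = \arg\min_k |\alpha^*(n,k,\varepsilon) - \alpha|$, and consider the tests $\varphi_{n,\theta_0}$ of $H_0:\theta = \theta_0$ versus $H_1: \theta \ne \theta_0$ defined by $$\varphi_{n,\theta_0}(X_n) = \begin{cases} 1, & \text{if } T_{n,\theta_0}(X_n) \le k_n \text{ or } T_{n,\theta_0}(X_n) \ge n - k_n,\\ 0, & \text{if } k_n < T_{n,\theta_0}(X_n) < n - k_n,\end{cases}$$ where $T_{n,\theta_0}(X_n) = \sum_{i=1}^n I(x_i - \theta_0 > 0)$. Then: 1. For $0 \le \delta < (1-\varepsilon)/2$, the $\delta$-consistency distance of $(\varphi_{n,\theta_0})$ at $F$ is $$K\{(\varphi_{n,\theta_0}),F,\delta\} = F^{-1}\Big\{\frac{1+\varepsilon}{2(1-\delta)}\Big\} - \theta_0$$ (equal to $F^{-1}\{(1+\varepsilon)/(2(1-\delta))\}$ when $\theta_0 = 0$). 2. The power breakdown point of $(\varphi_{n,\theta_0})$ at $F$ is $\delta^* = (1-\varepsilon)/2$. 3. The sequence $(\varphi_{n,\theta_0})$ has $\varepsilon$-robust power at $F$ if and only if $\varepsilon < 1/3$.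
   Context: For a distribution function $F$, $F^{-1}(p) = \inf\{x : F(x) \ge p\}$, and $F_\lambda(x) = F(x - \lambda)$. For $0 \le \delta < 1/2$, $\mathcal{F}_\delta(F) = \{G : G = (1-\delta)F + \delta H,\ H \text{ an arbitrary distribution on } \mathbb{R}\}$. For integers $n \ge 1$, $k \ge 0$, $\alpha^*(n,k,\varepsilon) = 1 - P(k < Z_n < n-k)$ with $Z_n \sim \mathrm{Binomial}(n,(1-\varepsilon)/2)$. Under $G$, $X_n = (x_1,\dots,x_n)$ is an i.i.d. sample of size $n$ from $G$. A sequence of nonrandomized tests $\varphi_{n,\theta_0}$, $n \ge n_0$, has $\delta$-robust power at $F$ if there exists $K$ such that $$\inf_{G \in \mathcal{F}_\delta(F_\lambda)} \lim_{n\to\infty} P_G\{\varphi_{n,\theta_0}(X_n) = 1\} = 1 \quad \text{for all } |\lambda| > K.$$ The $\delta$-consistency distance $K\{(\varphi_{n,\theta_0}),F,\delta\}$ is the infimum of the set of $K$ for which this holds. The power breakdown point $\delta^*$ of the sequence at $F$ is the supremum of the set of $\delta$ for which the sequence has $\delta$-robust power at $F$. *)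

theory Defs
  imports "HOL-Probability.Probability"
begin

definition is_distribution_function :: "(real \<Rightarrow> real) \<Rightarrow> bool" where
  "is_distribution_function F \<longleftrightarrow>
     mono F \<and> (\<forall>a. continuous (at_right a) F) \<and>
     (F \<longlongrightarrow> 0) at_bot \<and> (F \<longlongrightarrow> 1) at_top"

definition quantile :: "(real \<Rightarrow> real) \<Rightarrow> real \<Rightarrow> real" where
  "quantile F p = Inf {x. F x \<ge> p}"

definition shift_df :: "(real \<Rightarrow> real) \<Rightarrow> real \<Rightarrow> (real \<Rightarrow> real)" where
  "shift_df F l = (\<lambda>x. F (x - l))"

definition contam_nbhd :: "real \<Rightarrow> (real \<Rightarrow> real) \<Rightarrow> (real \<Rightarrow> real) set" where
  "contam_nbhd \<delta> F = {G. \<exists>H. is_distribution_function H \<and>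
                          G = (\<lambda>x. (1 - \<delta>) * F x + \<delta> * H x)}"

definition alpha_star :: "nat \<Rightarrow> nat \<Rightarrow> real \<Rightarrow> real" where
  "alpha_star n k \<epsilon> =
     1 - measure_pmf.prob (binomial_pmf n ((1 - \<epsilon>) / 2)) {z. k < z \<and> z < n - k}"

definition reject_prob ::
    "(nat \<Rightarrow> (nat \<Rightarrow> real) \<Rightarrow> bool) \<Rightarrow> (real \<Rightarrow> real) \<Rightarrow> nat \<Rightarrow> real" where
  "reject_prob \<phi> G n =
     measure (PiM {..<n} (\<lambda>_. interval_measure G))
             {x \<in> space (PiM {..<n} (\<lambda>_. interval_measure G)). \<phi> n x}"

definition robust_power_K ::
    "(nat \<Rightarrow> (nat \<Rightarrow> real) \<Rightarrow> bool) \<Rightarrow> (real \<Rightarrow> real) \<Rightarrow> real \<Rightarrow> real \<Rightarrow> bool" where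
  "robust_power_K \<phi> F \<delta> K \<longleftrightarrow>
     (\<forall>l. \<bar>l\<bar> > K \<longrightarrow>
        (\<forall>G \<in> contam_nbhd \<delta> (shift_df F l). (reject_prob \<phi> G \<longlonglongrightarrow> 1)))"

definition has_robust_power ::
    "(nat \<Rightarrow> (nat \<Rightarrow> real) \<Rightarrow> bool) \<Rightarrow> (real \<Rightarrow> real) \<Rightarrow> real \<Rightarrow> bool" where
  "has_robust_power \<phi> F \<delta> \<longleftrightarrow> (\<exists>K. robust_power_K \<phi> F \<delta> K)"

definition consistency_distance ::
    "(nat \<Rightarrow> (nat \<Rightarrow> real) \<Rightarrow> bool) \<Rightarrow> (real \<Rightarrow> real) \<Rightarrow> real \<Rightarrow> real" where
  "consistency_distance \<phi> F \<delta> = Inf {K. robust_power_K \<phi> F \<delta> K}"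

definition power_breakdown ::
    "(nat \<Rightarrow> (nat \<Rightarrow> real) \<Rightarrow> bool) \<Rightarrow> (real \<Rightarrow> real) \<Rightarrow> real" where
  "power_breakdown \<phi> F = Sup {\<delta>. 0 \<le> \<delta> \<and> \<delta> < 1/2 \<and> has_robust_power \<phi> F \<delta>}"

definition sign_stat :: "real \<Rightarrow> nat \<Rightarrow> (nat \<Rightarrow> real) \<Rightarrow> nat" where
  "sign_stat \<theta>0 n x = card {i \<in> {..<n}. x i - \<theta>0 > 0}"

definition sign_test :: "real \<Rightarrow> (nat \<Rightarrow> nat) \<Rightarrow> nat \<Rightarrow> (nat \<Rightarrow> real) \<Rightarrow> bool" where
  "sign_test \<theta>0 k n x \<longleftrightarrow>
     sign_stat \<theta>0 n x \<le> k n \<or> sign_stat \<theta>0 n x \<ge> n - k n"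

end

(*
  Under an i.i.d. sample from G the sign statistic is Binomial(n, p) with p = 1 - G theta0.
  Since the sizes of the tests converge to alpha, Hoeffding's inequality forces k n / n --> r,
  where r = (1 - eps) / 2; hence the rejection probability tends to 1 iff p < r or p > 1 - r
  (it tends to alpha at p = r and p = 1 - r, and to 0 in between).  On the neighbourhood of
  the shifted F, the value G theta0 = (1 - delta) F (theta0 - lambda) + delta h sweeps an interval
  as h ranges over [0, 1], and this interval avoids [r, 1 - r] iff
  (1 - delta) F (theta0 + |lambda|) > 1 - r.  Symmetry of the density gives
  F (theta0 + t) + F (theta0 - t) = 1, and unimodality makes F strictly increasing where
  0 < F < 1, so the last condition says that theta0 + |lambda| exceeds the
  (1 - r) / (1 - delta) quantile of F.
*)
theory Submission
  imports Defs "HOL-Real_Asymp.Real_Asymp"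
begin

section \<open>Binomial distribution\<close>

lemma sum_pmf_le_1: "finite A \<Longrightarrow> sum (pmf p) A \<le> 1"
  by (metis measure_measure_pmf_finite measure_pmf.subprob_measure_le_1)

lemma prob_le_1_minus_prob_disjoint:
  assumes "A \<inter> B = {}"
  shows "measure_pmf.prob M A \<le> 1 - measure_pmf.prob M B"
proof -
  have "measure_pmf.prob M A \<le> measure_pmf.prob M (UNIV - B)"
    using assms by (intro measure_pmf.finite_measure_mono) auto
  then show ?thesis
    using measure_pmf.prob_compl[of B M] by simp
qed

lemma prob_binomial_pmf_eq_sum:
  assumes "0 \<le> p" "p \<le> 1"
  shows "measure_pmf.prob (binomial_pmf n p) A = (\<Sum>j\<in>A \<inter> {..n}. pmf (binomial_pmf n p) j)"
proof -
  have "set_pmf (binomial_pmf n p) \<subseteq> {..n}"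
    using assms by (auto simp: set_pmf_binomial_eq split: if_splits)
  then have "measure_pmf.prob (binomial_pmf n p) A = measure_pmf.prob (binomial_pmf n p) (A \<inter> {..n})"
    by (metis inf.absorb_iff2 inf_assoc measure_Int_set_pmf)
  also have "\<dots> = (\<Sum>j\<in>A \<inter> {..n}. pmf (binomial_pmf n p) j)"
    by (rule measure_measure_pmf_finite) simp
  finally show ?thesis .
qed

lemma binomial_pmf_flip:
  assumes "0 \<le> r" "r \<le> 1" "j \<le> n"
  shows "pmf (binomial_pmf n (1 - r)) (n - j) = pmf (binomial_pmf n r) j"
  using assms by (simp add: binomial_symmetric[OF \<open>j \<le> n\<close>, symmetric] mult_ac)

lemma prob_binomial_pmf_flip:
  assumes "0 \<le> p" "p \<le> 1" and A: "\<And>j. j \<le> n \<Longrightarrow> n - j \<in> A \<longleftrightarrow> j \<in> A"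
  shows "measure_pmf.prob (binomial_pmf n (1 - p)) A = measure_pmf.prob (binomial_pmf n p) A"
proof -
  have "(\<Sum>j\<in>A \<inter> {..n}. pmf (binomial_pmf n (1 - p)) j)
      = (\<Sum>j\<in>A \<inter> {..n}. pmf (binomial_pmf n (1 - p)) (n - j))"
    by (rule sum.reindex_bij_witness[of _ "\<lambda>j. n - j" "\<lambda>j. n - j"]) (use A in auto)
  also have "\<dots> = (\<Sum>j\<in>A \<inter> {..n}. pmf (binomial_pmf n p) j)"
    by (intro sum.cong refl binomial_pmf_flip) (use assms in auto)
  finally show ?thesis
    using assms by (simp add: prob_binomial_pmf_eq_sum)
qed

lemma binomial_pmf_Suc_ratio:
  assumes "0 \<le> r" "r \<le> 1"
  shows "pmf (binomial_pmf n r) (Suc i) * (real (Suc i) * (1 - r))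
       = pmf (binomial_pmf n r) i * (real (n - i) * r)"
proof (cases "i < n")
  case True
  have "Suc i * (n choose Suc i) = (n - i) * (n choose i)"
    by (simp only: binomial_absorption binomial_absorb_comp)
  then have choose: "real (n choose Suc i) * real (Suc i) = real (n choose i) * real (n - i)"
    by (metis of_nat_mult mult.commute)
  have exp: "n - i = Suc (n - Suc i)"
    using True by simp
  have "pmf (binomial_pmf n r) (Suc i) * (real (Suc i) * (1 - r))
      = (real (n choose Suc i) * real (Suc i)) * r ^ Suc i * (1 - r) ^ Suc (n - Suc i)"
    using assms by (simp add: algebra_simps)
  also have "\<dots> = (real (n choose i) * real (n - i)) * r ^ Suc i * (1 - r) ^ (n - i)"
    by (simp only: choose exp)
  also have "\<dots> = pmf (binomial_pmf n r) i * (real (n - i) * r)"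
    using assms by (simp add: algebra_simps)
  finally show ?thesis .
qed (use assms in simp)

lemma binomial_pmf_geometric_growth:
  assumes r: "0 < r" "r < 1" and "0 \<le> \<rho>"
    and ratio: "\<And>i. j \<le> i \<Longrightarrow> i < j + L \<Longrightarrow> \<rho> * (real (Suc i) * (1 - r)) \<le> real (n - i) * r"
    and "l \<le> L"
  shows "\<rho> ^ l * pmf (binomial_pmf n r) j \<le> pmf (binomial_pmf n r) (j + l)"
  using \<open>l \<le> L\<close>
proof (induction l)
  case (Suc l)
  let ?p = "pmf (binomial_pmf n r)"
  have "\<rho> * (real (Suc (j + l)) * (1 - r)) \<le> real (n - (j + l)) * r"
    by (rule ratio) (use Suc.prems in auto)
  then have "(\<rho> * ?p (j + l)) * (real (Suc (j + l)) * (1 - r)) \<le> ?p (j + l) * (real (n - (j + l)) * r)"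
    using mult_left_mono[OF _ pmf_nonneg] by (metis mult.assoc mult.left_commute)
  also have "\<dots> = ?p (Suc (j + l)) * (real (Suc (j + l)) * (1 - r))"
    by (rule binomial_pmf_Suc_ratio[symmetric]) (use r in auto)
  finally have "\<rho> * ?p (j + l) \<le> ?p (Suc (j + l))"
    using r by (simp add: mult_le_cancel_right)
  moreover have "\<rho> * (\<rho> ^ l * ?p j) \<le> \<rho> * ?p (j + l)"
    using Suc \<open>0 \<le> \<rho>\<close> by (intro mult_left_mono) auto
  ultimately show ?case
    by simp
qed simp

lemma binomial_pmf_window_bound:
  assumes r: "0 < r" "r < 1" and \<rho>: "0 \<le> \<rho>" "\<rho> \<le> 1"
    and ratio: "\<And>i. j \<le> i \<Longrightarrow> i < j + L \<Longrightarrow> \<rho> * (real (Suc i) * (1 - r)) \<le> real (n - i) * r"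
  shows "(real L + 1) * (\<rho> ^ L * pmf (binomial_pmf n r) j) \<le> 1"
proof -
  let ?p = "pmf (binomial_pmf n r)"
  have "(real L + 1) * (\<rho> ^ L * ?p j) = (\<Sum>l\<le>L. \<rho> ^ L * ?p j)"
    by simp
  also have "\<dots> \<le> (\<Sum>l\<le>L. ?p (j + l))"
  proof (rule sum_mono)
    fix l assume "l \<in> {..L}"
    then have "\<rho> ^ L * ?p j \<le> \<rho> ^ l * ?p j"
      using power_decreasing[OF _ \<rho>] by (intro mult_right_mono) auto
    also have "\<dots> \<le> ?p (j + l)"
      using binomial_pmf_geometric_growth[OF r \<rho>(1) ratio] \<open>l \<in> {..L}\<close> by auto
    finally show "\<rho> ^ L * ?p j \<le> ?p (j + l)" .
  qed
  also have "\<dots> = sum ?p ((+) j ` {..L})"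
    by (simp add: sum.reindex)
  also have "\<dots> \<le> 1"
    by (rule sum_pmf_le_1) simp
  finally show ?thesis .
qed

text \<open>The ratio \<open>pmf (i + 1) / pmf i = (n - i) r / ((i + 1) (1 - r))\<close> decreases in \<open>i\<close>.\<close>
lemma binomial_ratio_ge:
  fixes x r :: real
  assumes r: "0 < r" "r < 1" and "real i + 1 \<le> x" "x \<le> real n"
  shows "(real n - x) * r / ((x + 1) * (1 - r)) * (real (Suc i) * (1 - r)) \<le> real (n - i) * r"
proof -
  have "0 < x + 1" "i \<le> n"
    using assms by linarith+
  then have "(real n - x) * r / ((x + 1) * (1 - r)) * (real (Suc i) * (1 - r))
      \<le> (real n - x) * r / ((x + 1) * (1 - r)) * ((x + 1) * (1 - r))"
    using assms by (intro mult_left_mono mult_right_mono) auto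
  also have "\<dots> \<le> real (n - i) * r"
    using assms \<open>0 < x + 1\<close> \<open>i \<le> n\<close> by (simp add: of_nat_diff mult_right_mono)
  finally show ?thesis .
qed

lemma binomial_pmf_uniformly_small_left:
  assumes r: "0 < r" "r < 1" and "c > 0"
  shows "\<forall>\<^sub>F n in sequentially. \<forall>j. real j \<le> (real n + 1) * r \<longrightarrow> pmf (binomial_pmf n r) j \<le> c"
proof -
  obtain L :: nat where L: "2 / c \<le> real L + 1"
    by (metis add_increasing2 real_arch_simple zero_le_one)
  \<comment> \<open>A window \<open>[j, j + L)\<close> with \<open>j \<le> (n + 1) r\<close> lies below \<open>x n\<close>, where the ratio
    \<open>pmf (i + 1) / pmf i\<close> is still at least \<open>\<rho> n\<close>; and \<open>\<rho> n \<longlonglongrightarrow> 1\<close>.\<close>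
  define x where "x n = (real n + 1) * r + real L" for n
  define \<rho> where "\<rho> n = (real n - x n) * r / ((x n + 1) * (1 - r))" for n
  have "\<rho> \<longlonglongrightarrow> 1"
    unfolding \<rho>_def x_def using r by (real_asymp simp: field_simps)
  then have "(\<lambda>n. \<rho> n ^ L) \<longlonglongrightarrow> 1"
    by (metis tendsto_power power_one)
  then have "\<forall>\<^sub>F n in sequentially. 1/2 < \<rho> n ^ L"
    by (rule order_tendstoD) simp
  moreover have "\<forall>\<^sub>F n in sequentially. x n \<le> real n"
    unfolding x_def using r by real_asymp
  ultimately show ?thesis
  proof eventually_elim
    case (elim n)
    have x_pos: "0 < x n + 1"
      using r by (simp add: x_def add_pos_nonneg)
    have \<rho>_nonneg: "0 \<le> \<rho> n"
      unfolding \<rho>_def using elim(2) r x_pos by simp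
    have "(real n - x n) * r \<le> (x n + 1) * (1 - r)"
      using r by (simp add: x_def algebra_simps)
    then have \<rho>_le_1: "\<rho> n \<le> 1"
      unfolding \<rho>_def using x_pos r by (simp add: divide_le_eq)
    show ?case
    proof (intro allI impI)
      fix j assume j: "real j \<le> (real n + 1) * r"
      have ratio: "\<rho> n * (real (Suc i) * (1 - r)) \<le> real (n - i) * r"
        if "j \<le> i" "i < j + L" for i
        unfolding \<rho>_def using that j elim(2) by (intro binomial_ratio_ge r) (auto simp: x_def)
      have "(real L + 1) * (1/2 * pmf (binomial_pmf n r) j)
          \<le> (real L + 1) * (\<rho> n ^ L * pmf (binomial_pmf n r) j)"
        using elim(1) by (intro mult_left_mono mult_right_mono) auto
      also have "\<dots> \<le> 1"
        using binomial_pmf_window_bound[OF r \<rho>_nonneg \<rho>_le_1 ratio] by simp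
      finally have "pmf (binomial_pmf n r) j \<le> 2 / (real L + 1)"
        by (simp add: field_simps)
      also have "\<dots> \<le> c"
        using L \<open>c > 0\<close> by (simp add: field_simps)
      finally show "pmf (binomial_pmf n r) j \<le> c" .
    qed
  qed
qed

lemma binomial_pmf_uniformly_small:
  assumes r: "0 < r" "r < 1" and "c > 0"
  shows "\<forall>\<^sub>F n in sequentially. \<forall>j. pmf (binomial_pmf n r) j \<le> c"
proof -
  have "0 < 1 - r" "1 - r < 1"
    using r by auto
  from binomial_pmf_uniformly_small_left[OF r \<open>c > 0\<close>]
    binomial_pmf_uniformly_small_left[OF this \<open>c > 0\<close>]
  show ?thesis
  proof eventually_elim
    case (elim n)
    show ?case
    proof
      fix j
      consider "real j \<le> (real n + 1) * r" | "n < j" | "j \<le> n" "(real n + 1) * r < real j"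
        by linarith
      then show "pmf (binomial_pmf n r) j \<le> c"
      proof cases
        case 1
        with elim(1) show ?thesis
          by blast
      next
        case 2
        with r \<open>c > 0\<close> show ?thesis
          by (simp add: binomial_eq_0)
      next
        case 3
        then have "real (n - j) \<le> (real n + 1) * (1 - r)"
          by (simp add: of_nat_diff algebra_simps)
        with elim(2) have "pmf (binomial_pmf n (1 - r)) (n - j) \<le> c"
          by auto
        with 3 r show ?thesis
          by (simp only: binomial_pmf_flip)
      qed
    qed
  qed
qed

lemma binomial_concentration:
  assumes "0 \<le> p" "p \<le> 1" "0 < \<eta>"
  shows "(\<lambda>n. measure_pmf.prob (binomial_pmf n p) {z. \<bar>real z - real n * p\<bar> < real n * \<eta>}) \<longlonglongrightarrow> 1"
proof (rule tendsto_sandwich[OF _ _ _ tendsto_const])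
  show "\<forall>\<^sub>F n in sequentially. 1 - 2 * exp (- 2 * real n * \<eta>\<^sup>2)
          \<le> measure_pmf.prob (binomial_pmf n p) {z. \<bar>real z - real n * p\<bar> < real n * \<eta>}"
    using eventually_gt_at_top[of 0]
  proof eventually_elim
    case (elim n)
    let ?far = "{z. \<eta> \<le> \<bar>real z / real n - p\<bar>}"
    have "\<bar>real z / real n - p\<bar> = \<bar>real z - real n * p\<bar> / real n" for z
      using elim by (simp add: field_simps)
    then have "{z. \<bar>real z - real n * p\<bar> < real n * \<eta>} = UNIV - ?far"
      using elim by (auto simp: le_divide_eq not_le mult.commute)
    moreover have "measure_pmf.prob (binomial_pmf n p) ?far \<le> 2 * exp (- 2 * real n * \<eta>\<^sup>2)"
      using binomial_distribution.prob_abs_ge'[of p n \<eta>] assms elim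
      by (simp add: binomial_distribution_def)
    ultimately show ?case
      using measure_pmf.prob_compl[of ?far "binomial_pmf n p"] by simp
  qed
  show "(\<lambda>n. 1 - 2 * exp (- 2 * real n * \<eta>\<^sup>2)) \<longlonglongrightarrow> 1"
    using \<open>0 < \<eta>\<close> by real_asymp
qed simp

lemma binomial_prob_tendsto_1:
  assumes "0 \<le> p" "p \<le> 1" "0 < \<eta>"
    and "\<forall>\<^sub>F n in sequentially. {z. \<bar>real z - real n * p\<bar> < real n * \<eta>} \<subseteq> A n"
  shows "(\<lambda>n. measure_pmf.prob (binomial_pmf n p) (A n)) \<longlonglongrightarrow> 1"
proof (rule tendsto_sandwich[OF _ _ binomial_concentration[OF assms(1-3)] tendsto_const])
  show "\<forall>\<^sub>F n in sequentially. measure_pmf.prob (binomial_pmf n p) {z. \<bar>real z - real n * p\<bar> < real n * \<eta>}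
          \<le> measure_pmf.prob (binomial_pmf n p) (A n)"
    using assms(4) by eventually_elim (rule measure_pmf.finite_measure_mono, auto)
qed simp

lemma binomial_prob_tendsto_0:
  assumes "0 \<le> p" "p \<le> 1" "0 < \<eta>"
    and "\<forall>\<^sub>F n in sequentially. A n \<inter> {z. \<bar>real z - real n * p\<bar> < real n * \<eta>} = {}"
  shows "(\<lambda>n. measure_pmf.prob (binomial_pmf n p) (A n)) \<longlonglongrightarrow> 0"
proof -
  have "(\<lambda>n. measure_pmf.prob (binomial_pmf n p) (UNIV - A n)) \<longlonglongrightarrow> 1"
    using assms(4) by (intro binomial_prob_tendsto_1[OF assms(1-3)]) (auto elim!: eventually_mono)
  then have "(\<lambda>n. 1 - measure_pmf.prob (binomial_pmf n p) (UNIV - A n)) \<longlonglongrightarrow> 1 - 1"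
    by (intro tendsto_diff tendsto_const)
  moreover have "1 - measure_pmf.prob (binomial_pmf n p) (UNIV - A n) = measure_pmf.prob (binomial_pmf n p) (A n)" for n
    using measure_pmf.prob_compl[of "A n" "binomial_pmf n p"] by simp
  ultimately show ?thesis
    by simp
qed

section \<open>Rejection probabilities of the sign test\<close>

definition rejection_region :: "nat \<Rightarrow> nat \<Rightarrow> nat set" where
  "rejection_region n j = {z. z \<le> j \<or> n - j \<le> z}"

definition sign_rejection_prob :: "nat \<Rightarrow> nat \<Rightarrow> real \<Rightarrow> real" where
  "sign_rejection_prob n j p = measure_pmf.prob (binomial_pmf n p) (rejection_region n j)"

lemma alpha_star_eq_sign_rejection_prob:
  "alpha_star n j \<epsilon> = sign_rejection_prob n j ((1 - \<epsilon>) / 2)"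
proof -
  have "rejection_region n j = UNIV - {z. j < z \<and> z < n - j}"
    by (auto simp: rejection_region_def)
  then show ?thesis
    unfolding alpha_star_def sign_rejection_prob_def
    using measure_pmf.prob_compl[of "{z. j < z \<and> z < n - j}" "binomial_pmf n ((1 - \<epsilon>) / 2)"]
    by simp
qed

lemma sign_rejection_prob_flip:
  assumes "0 \<le> p" "p \<le> 1"
  shows "sign_rejection_prob n j (1 - p) = sign_rejection_prob n j p"
  unfolding sign_rejection_prob_def
  by (rule prob_binomial_pmf_flip) (use assms in \<open>auto simp: rejection_region_def\<close>)

lemma sign_rejection_prob_0_le:
  assumes "0 \<le> p" "p \<le> 1"
  shows "sign_rejection_prob n 0 p \<le> pmf (binomial_pmf n p) 0 + pmf (binomial_pmf n p) n"
proof -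
  have "sign_rejection_prob n 0 p = sum (pmf (binomial_pmf n p)) (rejection_region n 0 \<inter> {..n})"
    unfolding sign_rejection_prob_def using assms by (rule prob_binomial_pmf_eq_sum)
  also have "\<dots> \<le> sum (pmf (binomial_pmf n p)) {0, n}"
    by (rule sum_mono2) (auto simp: rejection_region_def)
  also have "\<dots> \<le> pmf (binomial_pmf n p) 0 + pmf (binomial_pmf n p) n"
    by (cases "n = 0") auto
  finally show ?thesis .
qed

lemma sign_rejection_prob_Suc_le:
  "sign_rejection_prob n (Suc j) p
     \<le> sign_rejection_prob n j p + pmf (binomial_pmf n p) (Suc j) + pmf (binomial_pmf n p) (n - Suc j)"
proof -
  let ?M = "binomial_pmf n p"
  have "sign_rejection_prob n (Suc j) p \<le> measure_pmf.prob ?M (rejection_region n j \<union> {Suc j, n - Suc j})"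
    unfolding sign_rejection_prob_def
    by (rule measure_pmf.finite_measure_mono) (auto simp: rejection_region_def)
  also have "\<dots> \<le> sign_rejection_prob n j p + measure_pmf.prob ?M {Suc j, n - Suc j}"
    unfolding sign_rejection_prob_def by (rule measure_Un_le) auto
  also have "measure_pmf.prob ?M {Suc j, n - Suc j} \<le> pmf ?M (Suc j) + pmf ?M (n - Suc j)"
    by (cases "Suc j = n - Suc j") (auto simp: measure_measure_pmf_finite)
  finally show ?thesis
    by simp
qed

lemma discrete_intermediate_value:
  fixes a :: "nat \<Rightarrow> real"
  assumes "a 0 \<le> y" "y \<le> a n" "0 \<le> d" and step: "\<And>j. j < n \<Longrightarrow> a (Suc j) \<le> a j + d"
  shows "\<exists>j\<le>n. \<bar>a j - y\<bar> \<le> d"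
  using assms(2) step
proof (induction n)
  case 0
  with assms(1,3) show ?case
    by auto
next
  case (Suc n)
  show ?case
  proof (cases "y \<le> a n")
    case True
    with Suc show ?thesis
      by (metis le_Suc_eq less_Suc_eq)
  next
    case False
    with Suc.prems have "\<bar>a (Suc n) - y\<bar> \<le> d"
      by force
    then show ?thesis
      by blast
  qed
qed

lemma sign_rejection_prob_approximates:
  assumes r: "0 < r" "r < 1" and \<alpha>: "0 < \<alpha>" "\<alpha> < 1" and "0 < d"
  shows "\<forall>\<^sub>F n in sequentially. \<exists>j. \<bar>sign_rejection_prob n j r - \<alpha>\<bar> \<le> d"
proof -
  define c where "c = min d \<alpha> / 2"
  have c: "0 < c" "2 * c \<le> d" "2 * c \<le> \<alpha>"
    using \<open>0 < d\<close> \<alpha> by (auto simp: c_def)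
  show ?thesis
    using binomial_pmf_uniformly_small[OF r \<open>0 < c\<close>]
  proof eventually_elim
    case (elim n)
    let ?a = "\<lambda>j. sign_rejection_prob n j r"
    have "?a 0 \<le> \<alpha>"
      using sign_rejection_prob_0_le[of r n] elim[rule_format, of 0] elim[rule_format, of n] r c
      by simp
    moreover have "\<alpha> \<le> ?a n"
      using \<alpha> by (simp add: sign_rejection_prob_def rejection_region_def)
    moreover have "?a (Suc j) \<le> ?a j + 2 * c" for j
      using sign_rejection_prob_Suc_le[of n j r] elim[rule_format, of "Suc j"]
        elim[rule_format, of "n - Suc j"]
      by simp
    ultimately obtain j where "\<bar>?a j - \<alpha>\<bar> \<le> 2 * c"
      using discrete_intermediate_value[of ?a \<alpha> n "2 * c"] c by auto
    with c show ?case
      by (meson order_trans)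
  qed
qed

section \<open>Counting successes in independent trials\<close>

lemma sum_subsets_eq_prob_binomial:
  assumes "finite I" "0 \<le> q" "q \<le> 1"
  shows "(\<Sum>S\<in>{S. S \<subseteq> I \<and> card S \<in> R}. q ^ card S * (1 - q) ^ (card I - card S))
       = measure_pmf.prob (binomial_pmf (card I) q) R"
proof -
  let ?SS = "{S. S \<subseteq> I \<and> card S \<in> R}"
  have "finite ?SS"
    using assms by (auto intro: finite_subset[of _ "Pow I"])
  then have "(\<Sum>S\<in>?SS. q ^ card S * (1 - q) ^ (card I - card S))
      = (\<Sum>j\<in>R \<inter> {..card I}. \<Sum>S\<in>{S \<in> ?SS. card S = j}. q ^ card S * (1 - q) ^ (card I - card S))"
    by (rule sum.group[symmetric]) (use assms card_mono in auto)
  also have "\<dots> = (\<Sum>j\<in>R \<inter> {..card I}. pmf (binomial_pmf (card I) q) j)"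
  proof (rule sum.cong[OF refl])
    fix j assume "j \<in> R \<inter> {..card I}"
    then have "{S \<in> ?SS. card S = j} = {S. S \<subseteq> I \<and> card S = j}"
      by auto
    then show "(\<Sum>S\<in>{S \<in> ?SS. card S = j}. q ^ card S * (1 - q) ^ (card I - card S))
        = pmf (binomial_pmf (card I) q) j"
      using assms by (simp add: n_subsets)
  qed
  also have "\<dots> = measure_pmf.prob (binomial_pmf (card I) q) R"
    using assms by (simp add: prob_binomial_pmf_eq_sum)
  finally show ?thesis .
qed

lemma finite_product_prob_space_iid:
  "prob_space M \<Longrightarrow> finite I \<Longrightarrow> finite_product_prob_space (\<lambda>_. M) I"
  by (simp add: finite_product_prob_space_def finite_product_sigma_finite_def
      finite_product_sigma_finite_axioms_def product_prob_space_def product_prob_space_axioms_def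
      product_sigma_finite_def prob_space_imp_sigma_finite)

lemma success_pattern_count:
  assumes "x \<in> PiE I (\<lambda>i. if i \<in> S then A else space M - A)" "S \<subseteq> I"
  shows "{i \<in> I. x i \<in> A} = S"
  using assms by (auto simp: PiE_def Pi_def split: if_splits)

lemma measure_PiM_success_pattern:
  assumes M: "prob_space M" and A: "A \<in> sets M" and "finite I" "S \<subseteq> I"
  shows "measure (PiM I (\<lambda>_. M)) (PiE I (\<lambda>i. if i \<in> S then A else space M - A))
       = measure M A ^ card S * (1 - measure M A) ^ (card I - card S)"
proof -
  interpret P: finite_product_prob_space "\<lambda>_. M" I
    using M \<open>finite I\<close> by (rule finite_product_prob_space_iid)
  have "measure (PiM I (\<lambda>_. M)) (PiE I (\<lambda>i. if i \<in> S then A else space M - A))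
      = (\<Prod>i\<in>I. if i \<in> S then measure M A else 1 - measure M A)"
    using A by (subst P.prob_times) (auto intro!: prod.cong simp: P.M.prob_compl)
  also have "\<dots> = measure M A ^ card S * (1 - measure M A) ^ (card I - card S)"
    using assms by (simp add: prod.If_cases Int_absorb1 Diff_eq[symmetric] card_Diff_subset finite_subset)
  finally show ?thesis .
qed

lemma count_event_eq_UN_success_patterns:
  assumes "A \<subseteq> space M"
  shows "{x \<in> space (PiM I (\<lambda>_. M)). card {i \<in> I. x i \<in> A} \<in> R}
       = (\<Union>S\<in>{S. S \<subseteq> I \<and> card S \<in> R}. PiE I (\<lambda>i. if i \<in> S then A else space M - A))"
proof (intro equalityI subsetI)
  fix x assume "x \<in> {x \<in> space (PiM I (\<lambda>_. M)). card {i \<in> I. x i \<in> A} \<in> R}"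
  then show "x \<in> (\<Union>S\<in>{S. S \<subseteq> I \<and> card S \<in> R}. PiE I (\<lambda>i. if i \<in> S then A else space M - A))"
    by (intro UN_I[of "{i \<in> I. x i \<in> A}"]) (auto simp: space_PiM PiE_def Pi_def)
next
  fix x assume "x \<in> (\<Union>S\<in>{S. S \<subseteq> I \<and> card S \<in> R}. PiE I (\<lambda>i. if i \<in> S then A else space M - A))"
  then obtain S where S: "S \<subseteq> I" "card S \<in> R" "x \<in> PiE I (\<lambda>i. if i \<in> S then A else space M - A)"
    by blast
  moreover have "x \<in> space (PiM I (\<lambda>_. M))"
    using S assms by (auto simp: space_PiM PiE_def Pi_def split: if_splits)
  ultimately show "x \<in> {x \<in> space (PiM I (\<lambda>_. M)). card {i \<in> I. x i \<in> A} \<in> R}"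
    using success_pattern_count[OF S(3,1)] by simp
qed

lemma disjoint_family_success_patterns:
  "disjoint_family_on (\<lambda>S. PiE I (\<lambda>i. if i \<in> S then A else space M - A)) (Pow I)"
  unfolding disjoint_family_on_def
proof (intro ballI impI)
  fix S T assume ST: "S \<in> Pow I" "T \<in> Pow I" "S \<noteq> T"
  show "PiE I (\<lambda>i. if i \<in> S then A else space M - A) \<inter> PiE I (\<lambda>i. if i \<in> T then A else space M - A) = {}"
  proof (rule equals0I)
    fix x assume "x \<in> PiE I (\<lambda>i. if i \<in> S then A else space M - A) \<inter> PiE I (\<lambda>i. if i \<in> T then A else space M - A)"
    then have "{i \<in> I. x i \<in> A} = S" "{i \<in> I. x i \<in> A} = T"
      using success_pattern_count[of x I _ A M] ST(1,2) by auto
    with ST(3) show False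
      by simp
  qed
qed

lemma measure_PiM_count_eq_prob_binomial:
  assumes M: "prob_space M" and A: "A \<in> sets M" and I: "finite I"
  shows "measure (PiM I (\<lambda>_. M)) {x \<in> space (PiM I (\<lambda>_. M)). card {i \<in> I. x i \<in> A} \<in> R}
       = measure_pmf.prob (binomial_pmf (card I) (measure M A)) R"
proof -
  interpret P: finite_product_prob_space "\<lambda>_. M" I
    using M I by (rule finite_product_prob_space_iid)
  let ?SS = "{S. S \<subseteq> I \<and> card S \<in> R}"
  let ?pattern = "\<lambda>S. PiE I (\<lambda>i. if i \<in> S then A else space M - A)"
  have "measure (PiM I (\<lambda>_. M)) (\<Union>S\<in>?SS. ?pattern S) = (\<Sum>S\<in>?SS. measure (PiM I (\<lambda>_. M)) (?pattern S))"
  proof (rule P.finite_measure_finite_Union)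
    show "finite ?SS"
      using I by (auto intro: finite_subset[of _ "Pow I"])
    show "disjoint_family_on ?pattern ?SS"
      by (rule disjoint_family_on_mono[OF _ disjoint_family_success_patterns]) auto
    show "?pattern ` ?SS \<subseteq> P.events"
      using A I by (auto intro!: sets_PiM_I_finite)
  qed
  then have "measure (PiM I (\<lambda>_. M)) {x \<in> space (PiM I (\<lambda>_. M)). card {i \<in> I. x i \<in> A} \<in> R}
      = (\<Sum>S\<in>?SS. measure M A ^ card S * (1 - measure M A) ^ (card I - card S))"
    unfolding count_event_eq_UN_success_patterns[OF sets.sets_into_space[OF A]]
    by (simp add: measure_PiM_success_pattern[OF M A I])
  also have "\<dots> = measure_pmf.prob (binomial_pmf (card I) (measure M A)) R"
    using I by (intro sum_subsets_eq_prob_binomial) auto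
  finally show ?thesis .
qed

lemma reject_prob_sign_test:
  assumes "is_distribution_function G"
  shows "reject_prob (sign_test \<theta>0 k) G n = sign_rejection_prob n (k n) (1 - G \<theta>0)"
proof -
  let ?M = "interval_measure G"
  have "real_distribution ?M"
    using assms by (intro real_distribution_interval_measure) (auto simp: is_distribution_function_def mono_def)
  then interpret M: prob_space ?M
    by (simp add: real_distribution_def)
  have "measure ?M {..\<theta>0} = G \<theta>0"
    using assms by (intro measure_interval_measure_Iic) (auto simp: is_distribution_function_def mono_def)
  then have "measure ?M {\<theta>0<..} = 1 - G \<theta>0"
    using M.prob_compl[of "{..\<theta>0}"] by (simp add: Compl_eq_Diff_UNIV[symmetric] Compl_atMost)
  moreover have "sign_test \<theta>0 k n x \<longleftrightarrow> card {i \<in> {..<n}. x i \<in> {\<theta>0<..}} \<in> rejection_region n (k n)" for x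
    by (simp add: sign_test_def sign_stat_def rejection_region_def)
  ultimately show ?thesis
    unfolding reject_prob_def sign_rejection_prob_def
    using measure_PiM_count_eq_prob_binomial[OF M.prob_space_axioms, of "{\<theta>0<..}" "{..<n}"] by simp
qed

section \<open>Distribution functions and contamination\<close>

lemma is_distribution_function_bounded:
  assumes "is_distribution_function G"
  shows "0 \<le> G x" "G x \<le> 1"
proof -
  have G: "mono G" "(G \<longlongrightarrow> 0) at_bot" "(G \<longlongrightarrow> 1) at_top"
    using assms by (auto simp: is_distribution_function_def)
  show "0 \<le> G x"
    by (rule tendsto_upperbound[OF G(2)])
       (auto simp: eventually_at_bot_linorder intro!: exI[of _ x] monoD[OF G(1)])
  show "G x \<le> 1"
    by (rule tendsto_lowerbound[OF G(3)])
       (auto simp: eventually_at_top_linorder intro!: exI[of _ x] monoD[OF G(1)])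
qed

lemma is_distribution_function_shift:
  assumes "is_distribution_function F"
  shows "is_distribution_function (shift_df F l)"
proof -
  have F: "mono F" "\<And>a. continuous (at_right a) F" "(F \<longlongrightarrow> 0) at_bot" "(F \<longlongrightarrow> 1) at_top"
    using assms by (auto simp: is_distribution_function_def)
  have "mono (shift_df F l)"
    using F(1) by (auto simp: mono_def shift_df_def)
  moreover have "continuous (at_right a) (shift_df F l)" for a
  proof -
    have "(F \<longlongrightarrow> F (a - l)) (filtermap (\<lambda>x. x - l) (at_right a))"
      using F(2)[of "a - l"] by (simp add: filtermap_at_right_shift continuous_within)
    then show ?thesis
      by (simp add: continuous_within shift_df_def tendsto_compose_filtermap[symmetric] o_def)
  qed
  moreover have "(shift_df F l \<longlongrightarrow> 0) at_bot" "(shift_df F l \<longlongrightarrow> 1) at_top"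
    unfolding shift_df_def
    by (rule filterlim_compose[OF F(3)] filterlim_compose[OF F(4)], real_asymp)+
  ultimately show ?thesis
    by (simp add: is_distribution_function_def)
qed

lemma is_distribution_function_mixture:
  assumes "is_distribution_function G" "is_distribution_function H" "0 \<le> \<delta>" "\<delta> \<le> 1"
  shows "is_distribution_function (\<lambda>x. (1 - \<delta>) * G x + \<delta> * H x)"
proof -
  have G: "(G \<longlongrightarrow> 0) at_bot" "(G \<longlongrightarrow> 1) at_top"
    and H: "(H \<longlongrightarrow> 0) at_bot" "(H \<longlongrightarrow> 1) at_top"
    using assms by (auto simp: is_distribution_function_def)
  have "mono (\<lambda>x. (1 - \<delta>) * G x + \<delta> * H x)"
    using assms by (auto simp: is_distribution_function_def mono_def intro!: add_mono mult_left_mono)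
  moreover have "((\<lambda>x. (1 - \<delta>) * G x + \<delta> * H x) \<longlongrightarrow> (1 - \<delta>) * 0 + \<delta> * 0) at_bot"
    "((\<lambda>x. (1 - \<delta>) * G x + \<delta> * H x) \<longlongrightarrow> (1 - \<delta>) * 1 + \<delta> * 1) at_top"
    by (intro tendsto_intros G H)+
  ultimately show ?thesis
    using assms by (auto simp: is_distribution_function_def intro!: continuous_intros)
qed

lemma is_distribution_function_step: "is_distribution_function (\<lambda>x. if c \<le> x then 1 else 0)"
proof -
  let ?H = "\<lambda>x::real. if c \<le> x then 1 else 0 :: real"
  have "continuous (at_right a) ?H" for a
  proof -
    have "\<forall>\<^sub>F x in at_right a. ?H x = ?H a"
    proof (cases "a < c")
      case True
      then show ?thesis
        by (intro eventually_at_rightI[of a c]) auto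
    next
      case False
      then show ?thesis
        by (intro eventually_at_rightI[of a "a + 1"]) auto
    qed
    then show ?thesis
      unfolding continuous_within by (rule tendsto_eventually)
  qed
  moreover have "(?H \<longlongrightarrow> 0) at_bot"
    by (rule tendsto_eventually) (auto simp: eventually_at_bot_linorder intro!: exI[of _ "c - 1"])
  moreover have "(?H \<longlongrightarrow> 1) at_top"
    by (rule tendsto_eventually) (auto simp: eventually_at_top_linorder intro!: exI[of _ c])
  ultimately show ?thesis
    by (auto simp: is_distribution_function_def mono_def)
qed

lemma contam_nbhd_is_distribution_function:
  assumes "is_distribution_function F" "0 \<le> \<delta>" "\<delta> \<le> 1" "G \<in> contam_nbhd \<delta> F"
  shows "is_distribution_function G"
  using assms is_distribution_function_mixture by (auto simp: contam_nbhd_def)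

lemma contam_nbhd_values_at:
  "(\<lambda>G. G x) ` contam_nbhd \<delta> F = (\<lambda>h. (1 - \<delta>) * F x + \<delta> * h) ` {0..1}"
proof (intro equalityI subsetI)
  fix g assume "g \<in> (\<lambda>G. G x) ` contam_nbhd \<delta> F"
  then obtain H where "is_distribution_function H" "g = (1 - \<delta>) * F x + \<delta> * H x"
    by (auto simp: contam_nbhd_def)
  then show "g \<in> (\<lambda>h. (1 - \<delta>) * F x + \<delta> * h) ` {0..1}"
    using is_distribution_function_bounded by auto
next
  fix g assume "g \<in> (\<lambda>h. (1 - \<delta>) * F x + \<delta> * h) ` {0..1}"
  then obtain h where h: "0 \<le> h" "h \<le> 1" "g = (1 - \<delta>) * F x + \<delta> * h"
    by auto
  define H where "H y = (1 - h) * (if x + 1 \<le> y then 1 else 0) + h * (if x \<le> y then 1 else 0)" for y :: real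
  have "is_distribution_function H"
    unfolding H_def using h is_distribution_function_step
    by (intro is_distribution_function_mixture) auto
  moreover have "H x = h"
    by (simp add: H_def)
  ultimately show "g \<in> (\<lambda>G. G x) ` contam_nbhd \<delta> F"
    using h by (auto simp: contam_nbhd_def image_iff)
qed

lemma mixture_meets_band:
  fixes \<delta> v r :: real
  assumes "0 \<le> \<delta>" "r \<le> 1/2" and low: "(1 - \<delta>) * v \<le> 1 - r" and high: "(1 - \<delta>) * (1 - v) \<le> 1 - r"
  shows "\<exists>h\<in>{0..1}. r \<le> (1 - \<delta>) * v + \<delta> * h \<and> (1 - \<delta>) * v + \<delta> * h \<le> 1 - r"
proof -
  define y where "y = max ((1 - \<delta>) * v) r"
  have "\<exists>h\<ge>0. h \<le> 1 \<and> (1 - \<delta>) * v + \<delta> * h = y"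
    using high \<open>0 \<le> \<delta>\<close> by (intro IVT) (auto simp: y_def algebra_simps)
  moreover have "r \<le> y" "y \<le> 1 - r"
    using low assms by (auto simp: y_def)
  ultimately show ?thesis
    by force
qed

lemma band_avoided_by_mixtures_iff:
  fixes \<delta> v r :: real
  assumes "0 \<le> \<delta>" "\<delta> \<le> 1" "r \<le> 1/2"
  shows "(\<forall>h\<in>{0..1}. (1 - \<delta>) * v + \<delta> * h < r \<or> 1 - r < (1 - \<delta>) * v + \<delta> * h)
     \<longleftrightarrow> 1 - r < (1 - \<delta>) * max v (1 - v)"
proof
  assume avoided: "\<forall>h\<in>{0..1}. (1 - \<delta>) * v + \<delta> * h < r \<or> 1 - r < (1 - \<delta>) * v + \<delta> * h"
  have "(1 - \<delta>) * max v (1 - v) = max ((1 - \<delta>) * v) ((1 - \<delta>) * (1 - v))"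
    using assms by (simp add: max_mult_distrib_left)
  with mixture_meets_band[of \<delta> r v] avoided assms show "1 - r < (1 - \<delta>) * max v (1 - v)"
    by force
next
  assume "1 - r < (1 - \<delta>) * max v (1 - v)"
  then consider "1 - r < (1 - \<delta>) * v" | "1 - r < (1 - \<delta>) * (1 - v)"
    by (auto simp: max_def split: if_splits)
  then show "\<forall>h\<in>{0..1}. (1 - \<delta>) * v + \<delta> * h < r \<or> 1 - r < (1 - \<delta>) * v + \<delta> * h"
  proof cases
    case 1
    have "0 \<le> \<delta> * h" if "0 \<le> h" for h
      using that assms by simp
    with 1 show ?thesis
      by force
  next
    case 2
    show ?thesis
    proof (intro ballI disjI1)
      fix h :: real assume "h \<in> {0..1}"
      then have "(1 - \<delta>) * v + \<delta> * h \<le> (1 - \<delta>) * v + \<delta>"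
        using assms by (simp add: mult_left_le)
      also have "\<dots> = 1 - (1 - \<delta>) * (1 - v)"
        by (simp add: algebra_simps)
      also have "\<dots> < r"
        using 2 by simp
      finally show "(1 - \<delta>) * v + \<delta> * h < r" .
    qed
  qed
qed

lemma symmetric_df_max_eq:
  fixes F :: "real \<Rightarrow> real"
  assumes "mono F" and symm: "\<And>t. F (\<theta>0 + t) + F (\<theta>0 - t) = 1"
  shows "max (F (\<theta>0 - l)) (1 - F (\<theta>0 - l)) = F (\<theta>0 + \<bar>l\<bar>)"
proof (cases "0 \<le> l")
  case True
  then have "F (\<theta>0 - l) \<le> F (\<theta>0 + l)"
    using \<open>mono F\<close> by (simp add: monoD)
  with True symm[of l] show ?thesis
    by (simp add: max_def)
next
  case False
  then have "F (\<theta>0 + l) \<le> F (\<theta>0 - l)"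
    using \<open>mono F\<close> by (simp add: monoD)
  with False symm[of l] show ?thesis
    by (simp add: max_def)
qed

lemma quantile_continuous_df:
  assumes F: "is_distribution_function F" and cont: "continuous_on UNIV F" and q: "0 < q" "q < 1"
  shows "F (quantile F q) = q" and "x < quantile F q \<Longrightarrow> F x < q"
proof -
  let ?S = "{x. q \<le> F x}"
  have lim: "(F \<longlongrightarrow> 0) at_bot" "(F \<longlongrightarrow> 1) at_top"
    using F by (auto simp: is_distribution_function_def)
  obtain x0 where "q < F x0"
    using order_tendstoD(1)[OF lim(2) \<open>q < 1\<close>] by (auto simp: eventually_at_top_linorder)
  then have nonempty: "?S \<noteq> {}"
    by (auto intro: less_imp_le)
  obtain b where b: "\<And>x. x \<le> b \<Longrightarrow> F x < q"
    using order_tendstoD(2)[OF lim(1) \<open>0 < q\<close>] by (auto simp: eventually_at_bot_linorder)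
  have bdd: "bdd_below ?S"
  proof (rule bdd_belowI)
    fix x assume "x \<in> ?S"
    then show "b \<le> x"
      using b[of x] by (cases "x \<le> b") auto
  qed
  have "closed ?S"
    by (rule closed_Collect_le[OF continuous_on_const cont])
  then have in_S: "q \<le> F (quantile F q)"
    using closed_contains_Inf[OF nonempty bdd] by (simp add: quantile_def)
  show below: "F x < q" if "x < quantile F q" for x
    using that cInf_lower[OF _ bdd, of x] by (force simp: quantile_def)
  have "isCont F (quantile F q)"
    using cont by (simp add: continuous_on_eq_continuous_at)
  then have "(F \<longlongrightarrow> F (quantile F q)) (at_left (quantile F q))"
    by (simp add: isCont_def filterlim_at_split)
  moreover have "\<forall>\<^sub>F x in at_left (quantile F q). F x \<le> q"
    using eventually_at_left_real[of "quantile F q - 1" "quantile F q"]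
    by (auto elim!: eventually_mono intro: less_imp_le below)
  ultimately have "F (quantile F q) \<le> q"
    by (intro tendsto_upperbound) (auto simp: trivial_limit_at_left_real)
  with in_S show "F (quantile F q) = q"
    by simp
qed

lemma quantile_less_iff:
  assumes F: "is_distribution_function F" and cont: "continuous_on UNIV F" and q: "0 < q" "q < 1"
    and strict: "\<And>a b. a < b \<Longrightarrow> 0 < F a \<Longrightarrow> F b < 1 \<Longrightarrow> F a < F b"
  shows "quantile F q < x \<longleftrightarrow> q < F x"
proof
  assume "quantile F q < x"
  moreover have "F (quantile F q) = q"
    using quantile_continuous_df[OF F cont q] by simp
  ultimately show "q < F x"
    using strict[of "quantile F q" x] q is_distribution_function_bounded[OF F, of x]
    by (cases "F x < 1") auto
next
  assume "q < F x"
  then show "quantile F q < x"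
    using quantile_continuous_df[OF F cont q] F
    by (metis is_distribution_function_def leI monoD order.strict_iff_not)
qed

lemma threshold_set_eq_atLeast:
  fixes c :: real
  assumes "0 \<le> c" and P: "\<And>t. 0 \<le> t \<Longrightarrow> P t \<longleftrightarrow> c < t"
  shows "{K. \<forall>t\<ge>0. K < t \<longrightarrow> P t} = {c..}"
proof (intro equalityI subsetI)
  fix K assume K: "K \<in> {K. \<forall>t\<ge>0. K < t \<longrightarrow> P t}"
  show "K \<in> {c..}"
  proof (rule ccontr)
    assume "K \<notin> {c..}"
    then have "K < max 0 ((K + c) / 2)" "max 0 ((K + c) / 2) \<le> c"
      using \<open>0 \<le> c\<close> by (simp_all add: less_max_iff_disj field_simps)
    with K P[of "max 0 ((K + c) / 2)"] show False
      by auto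
  qed
qed (use P in auto)

section \<open>Distribution functions with a density\<close>

context
  fixes F f :: "real \<Rightarrow> real"
  assumes dfF: "is_distribution_function F"
    and dens_nonneg: "\<And>x. 0 \<le> f x" and dens_int: "integrable lborel f"
    and dens: "\<And>x. F x = (\<integral>t. indicator {..x} t * f t \<partial>lborel)"
begin

lemma integrable_density_on: "A \<in> sets borel \<Longrightarrow> integrable lborel (\<lambda>t. indicator A t * f t)"
  using integrable_mult_indicator[of A lborel f] dens_int by simp

lemma df_diff_eq_integral:
  assumes "a \<le> b"
  shows "F b - F a = (\<integral>t. indicator {a<..b} t * f t \<partial>lborel)"
proof -
  have "F b - F a = (\<integral>t. indicator {..b} t * f t - indicator {..a} t * f t \<partial>lborel)"
    unfolding dens by (rule Bochner_Integration.integral_diff[symmetric]) (auto intro: integrable_density_on)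
  also have "\<dots> = (\<integral>t. indicator {a<..b} t * f t \<partial>lborel)"
    by (rule Bochner_Integration.integral_cong) (use assms in \<open>auto simp: indicator_def\<close>)
  finally show ?thesis .
qed

lemma density_vanishes_where_df_flat:
  assumes "a < b" "F a = F b"
  shows "\<exists>z. a < z \<and> z < b \<and> f z = 0"
proof (rule ccontr)
  assume nz: "\<not> (\<exists>z. a < z \<and> z < b \<and> f z = 0)"
  have "(\<integral>t. indicator {a<..b} t * f t \<partial>lborel) = 0"
    using df_diff_eq_integral[of a b] assms by simp
  then have "AE t in lborel. indicator {a<..b} t * f t = 0"
    using integrable_density_on[of "{a<..b}"] dens_nonneg
    by (subst integral_nonneg_eq_0_iff_AE[symmetric]) auto
  then have "AE t in lborel. t \<notin> {a<..<b}"
    by eventually_elim (use nz in \<open>auto simp: indicator_def split: if_splits\<close>)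
  then have "emeasure lborel {a<..<b} = 0"
    by (subst (asm) AE_iff_measurable[of "{a<..<b}"]) auto
  with \<open>a < b\<close> show False
    by simp
qed

lemma df_const_where_density_vanishes:
  assumes "\<And>t. z < t \<Longrightarrow> t \<le> y \<Longrightarrow> f t = 0" "z \<le> y"
  shows "F y = F z"
proof -
  have "(\<lambda>t. indicator {z<..y} t * f t) = (\<lambda>t. 0 :: real)"
    using assms by (auto simp: fun_eq_iff indicator_def)
  then show ?thesis
    using df_diff_eq_integral[OF \<open>z \<le> y\<close>] by simp
qed

lemma df_eq_1_if_density_vanishes_above:
  assumes "\<And>t. z \<le> t \<Longrightarrow> f t = 0"
  shows "F z = 1"
proof -
  have "F y = F z" if "z \<le> y" for y
    by (rule df_const_where_density_vanishes) (use assms that in auto)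
  then have ev: "\<forall>\<^sub>F y in at_top. F y = F z"
    by (rule eventually_mono[OF eventually_ge_at_top[of z]])
  have "(F \<longlongrightarrow> 1) at_top"
    using dfF by (simp add: is_distribution_function_def)
  from Lim_transform_eventually[OF this ev] show "F z = 1"
    by (simp add: tendsto_const_iff)
qed

lemma df_eq_0_if_density_vanishes_below:
  assumes "\<And>t. t \<le> z \<Longrightarrow> f t = 0"
  shows "F z = 0"
proof -
  have "(\<lambda>t. indicator {..z} t * f t) = (\<lambda>t. 0 :: real)"
    using assms by (auto simp: fun_eq_iff indicator_def)
  then show ?thesis
    by (simp add: dens)
qed

text \<open>A unimodal density vanishing at one point vanishes on a half-line, where \<open>F\<close> is then
  \<open>0\<close> or \<open>1\<close>.\<close>
lemma unimodal_density_df_strict_mono: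
  assumes unimodal: "\<exists>m. mono_on {..m} f \<and> antimono_on {m..} f"
    and "a < b" "0 < F a" "F b < 1"
  shows "F a < F b"
proof (rule ccontr)
  have mono: "F x \<le> F y" if "x \<le> y" for x y
    using dfF that by (simp add: is_distribution_function_def monoD)
  assume "\<not> F a < F b"
  with mono[of a b] \<open>a < b\<close> have "F a = F b"
    by simp
  then obtain z where z: "a < z" "z < b" "f z = 0"
    using density_vanishes_where_df_flat[OF \<open>a < b\<close>] by blast
  obtain m where up: "mono_on {..m} f" and down: "antimono_on {m..} f"
    using unimodal by blast
  show False
  proof (cases "m \<le> z")
    case True
    have "f t = 0" if "z \<le> t" for t
      using monotone_onD[OF down, of z t] True that z(3) dens_nonneg[of t] by simp
    then have "F z = 1"
      by (rule df_eq_1_if_density_vanishes_above)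
    with mono[of z b] z \<open>F b < 1\<close> show False
      by simp
  next
    case False
    have "f t = 0" if "t \<le> z" for t
      using monotone_onD[OF up, of t z] False that z(3) dens_nonneg[of t] by simp
    then have "F z = 0"
      by (rule df_eq_0_if_density_vanishes_below)
    with mono[of a z] z \<open>0 < F a\<close> show False
      by simp
  qed
qed

lemma df_reflect_symmetric_density:
  assumes symm: "\<And>t. f (\<theta>0 + t) = f (\<theta>0 - t)"
  shows "F (\<theta>0 - s) = (\<integral>u. indicator {\<theta>0 + s<..} u * f u \<partial>lborel)"
proof -
  have "F (\<theta>0 - s) = (\<integral>u. indicator {..\<theta>0 - s} u * f u \<partial>lborel)"
    by (rule dens)
  also have "\<dots> = \<bar>-1\<bar> *\<^sub>R (\<integral>x. indicator {..\<theta>0 - s} (2 * \<theta>0 + (-1) * x) * f (2 * \<theta>0 + (-1) * x) \<partial>lborel)"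
    by (rule lborel_integral_real_affine) simp
  also have "\<dots> = (\<integral>x. indicator {\<theta>0 + s..} x * f x \<partial>lborel)"
  proof -
    have "indicator {..\<theta>0 - s} (2 * \<theta>0 + (-1) * x) * f (2 * \<theta>0 + (-1) * x)
        = indicator {\<theta>0 + s..} x * f x" for x :: real
    proof -
      have "f (2 * \<theta>0 + (-1) * x) = f (\<theta>0 - (x - \<theta>0))"
        by simp
      also have "\<dots> = f x"
        using symm[of "x - \<theta>0"] by simp
      finally show ?thesis
        by (simp add: indicator_def)
    qed
    then show ?thesis
      by simp
  qed
  also have "\<dots> = (\<integral>x. indicator {\<theta>0 + s<..} x * f x \<partial>lborel)"
  proof (rule integral_cong_AE)
    show "(\<lambda>x. indicator {\<theta>0 + s..} x * f x) \<in> borel_measurable lborel"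
      "(\<lambda>x. indicator {\<theta>0 + s<..} x * f x) \<in> borel_measurable lborel"
      by (rule borel_measurable_integrable[OF integrable_density_on], simp)+
    show "AE x in lborel. indicator {\<theta>0 + s..} x * f x = indicator {\<theta>0 + s<..} x * f x"
      using AE_lborel_singleton[of "\<theta>0 + s"] by eventually_elim (auto simp: indicator_def)
  qed
  finally show ?thesis .
qed

lemma symmetric_density_df:
  assumes symm: "\<And>t. f (\<theta>0 + t) = f (\<theta>0 - t)"
  shows "F (\<theta>0 + t) + F (\<theta>0 - t) = 1"
proof -
  define c where "c = (\<integral>t. f t \<partial>lborel)"
  \<comment> \<open>the sum is the total mass \<open>c\<close> for every \<open>s\<close>; letting \<open>s \<rightarrow> \<infinity>\<close> gives \<open>c = 1\<close>\<close>
  have sum_const: "F (\<theta>0 + s) + F (\<theta>0 - s) = c" for s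
  proof -
    have "F (\<theta>0 + s) + F (\<theta>0 - s)
        = (\<integral>u. indicator {..\<theta>0 + s} u * f u + indicator {\<theta>0 + s<..} u * f u \<partial>lborel)"
      unfolding df_reflect_symmetric_density[OF symm] dens[of "\<theta>0 + s"]
      by (rule Bochner_Integration.integral_add[symmetric]) (auto intro: integrable_density_on)
    also have "\<dots> = c"
      unfolding c_def by (rule Bochner_Integration.integral_cong) (auto simp: indicator_def)
    finally show ?thesis .
  qed
  have F: "(F \<longlongrightarrow> 0) at_bot" "(F \<longlongrightarrow> 1) at_top"
    using dfF by (auto simp: is_distribution_function_def)
  have "((\<lambda>s. F (\<theta>0 + s)) \<longlongrightarrow> 1) at_top"
    by (rule filterlim_compose[OF F(2)]) real_asymp
  moreover have "((\<lambda>s. F (\<theta>0 - s)) \<longlongrightarrow> 0) at_top"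
    by (rule filterlim_compose[OF F(1)]) real_asymp
  ultimately have "((\<lambda>s. F (\<theta>0 + s) + F (\<theta>0 - s)) \<longlongrightarrow> 1 + 0) at_top"
    by (rule tendsto_add)
  then have "c = 1"
    by (simp add: sum_const tendsto_const_iff)
  with sum_const show ?thesis
    by simp
qed

end

section \<open>Robust power of the sign test\<close>

text \<open>Here \<open>r\<close> stands for \<open>(1 - \<epsilon>) / 2\<close>, the success probability in \<open>alpha_star\<close>.\<close>
context
  fixes r \<alpha> :: real and k :: "nat \<Rightarrow> nat"
  assumes r: "0 < r" "r \<le> 1/2" and \<alpha>: "0 < \<alpha>" "\<alpha> < 1"
    and k_opt: "\<And>n j. \<bar>sign_rejection_prob n (k n) r - \<alpha>\<bar> \<le> \<bar>sign_rejection_prob n j r - \<alpha>\<bar>"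
begin

lemma size_tendsto_alpha: "(\<lambda>n. sign_rejection_prob n (k n) r) \<longlonglongrightarrow> \<alpha>"
proof (rule tendstoI)
  fix e :: real assume "0 < e"
  have "0 < r" "r < 1"
    using r by auto
  from sign_rejection_prob_approximates[OF this \<alpha> half_gt_zero[OF \<open>0 < e\<close>]]
  show "\<forall>\<^sub>F n in sequentially. dist (sign_rejection_prob n (k n) r) \<alpha> < e"
  proof eventually_elim
    case (elim n)
    then obtain j where "\<bar>sign_rejection_prob n j r - \<alpha>\<bar> \<le> e / 2"
      by blast
    with k_opt[of n j] \<open>0 < e\<close> show ?case
      by (simp add: dist_real_def)
  qed
qed

lemma critical_value_lower:
  assumes "0 < \<eta>"
  shows "\<forall>\<^sub>F n in sequentially. real n * r - real n * \<eta> \<le> real (k n)"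
proof -
  define near where "near n = {z. \<bar>real z - real n * r\<bar> < real n * \<eta>}" for n
  have "(\<lambda>n. measure_pmf.prob (binomial_pmf n r) (near n)) \<longlonglongrightarrow> 1"
    unfolding near_def using r \<open>0 < \<eta>\<close> by (intro binomial_concentration) auto
  then have "\<forall>\<^sub>F n in sequentially. 1 - \<alpha> / 2 < measure_pmf.prob (binomial_pmf n r) (near n)"
    by (rule order_tendstoD) (use \<alpha> in simp)
  moreover have "\<forall>\<^sub>F n in sequentially. \<alpha> / 2 < sign_rejection_prob n (k n) r"
    by (rule order_tendstoD[OF size_tendsto_alpha]) (use \<alpha> in simp)
  ultimately show ?thesis
  proof eventually_elim
    case (elim n)
    show ?case
    proof (rule ccontr)
      assume "\<not> real n * r - real n * \<eta> \<le> real (k n)"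
      moreover have "real n - real (k n) \<le> real (n - k n)" "real n * r \<le> real n * (1 - r)"
        using r by (linarith, intro mult_left_mono, auto)
      ultimately have "rejection_region n (k n) \<inter> near n = {}"
        by (auto simp: rejection_region_def near_def abs_less_iff algebra_simps)
      then have "sign_rejection_prob n (k n) r \<le> 1 - measure_pmf.prob (binomial_pmf n r) (near n)"
        unfolding sign_rejection_prob_def by (rule prob_le_1_minus_prob_disjoint)
      with elim show False
        by linarith
    qed
  qed
qed

lemma critical_value_upper:
  assumes "0 < \<eta>"
  shows "\<forall>\<^sub>F n in sequentially. real (k n) \<le> real n * r + real n * \<eta>"
proof -
  define near where "near n = {z. \<bar>real z - real n * r\<bar> < real n * \<eta>}" for n
  have "(\<lambda>n. measure_pmf.prob (binomial_pmf n r) (near n)) \<longlonglongrightarrow> 1"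
    unfolding near_def using r \<open>0 < \<eta>\<close> by (intro binomial_concentration) auto
  then have "\<forall>\<^sub>F n in sequentially. (1 + \<alpha>) / 2 < measure_pmf.prob (binomial_pmf n r) (near n)"
    by (rule order_tendstoD) (use \<alpha> in simp)
  moreover have "\<forall>\<^sub>F n in sequentially. sign_rejection_prob n (k n) r < (1 + \<alpha>) / 2"
    by (rule order_tendstoD[OF size_tendsto_alpha]) (use \<alpha> in simp)
  ultimately show ?thesis
  proof eventually_elim
    case (elim n)
    show ?case
    proof (rule ccontr)
      assume "\<not> real (k n) \<le> real n * r + real n * \<eta>"
      then have "near n \<subseteq> rejection_region n (k n)"
        by (auto simp: rejection_region_def near_def abs_less_iff)
      then have "measure_pmf.prob (binomial_pmf n r) (near n) \<le> sign_rejection_prob n (k n) r"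
        unfolding sign_rejection_prob_def by (rule measure_pmf.finite_measure_mono) simp
      with elim show False
        by linarith
    qed
  qed
qed

lemma sign_rejection_prob_tendsto_1:
  assumes "0 \<le> p" "p < r"
  shows "(\<lambda>n. sign_rejection_prob n (k n) p) \<longlonglongrightarrow> 1"
  unfolding sign_rejection_prob_def
proof (rule binomial_prob_tendsto_1)
  define \<eta> where "\<eta> = (r - p) / 2"
  show "0 \<le> p" "p \<le> 1" "0 < \<eta>"
    using assms r by (auto simp: \<eta>_def)
  show "\<forall>\<^sub>F n in sequentially.
          {z. \<bar>real z - real n * p\<bar> < real n * \<eta>} \<subseteq> rejection_region n (k n)"
    using critical_value_lower[OF \<open>0 < \<eta>\<close>]
  proof eventually_elim
    case (elim n)
    have "real n * p + real n * \<eta> = real n * r - real n * \<eta>"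
      by (simp add: \<eta>_def algebra_simps)
    with elim have "real z < real (k n)" if "\<bar>real z - real n * p\<bar> < real n * \<eta>" for z
      using that unfolding abs_less_iff by linarith
    then show ?case
      by (auto simp: rejection_region_def less_imp_le)
  qed
qed

lemma sign_rejection_prob_tendsto_0:
  assumes "r < p" "p < 1 - r"
  shows "(\<lambda>n. sign_rejection_prob n (k n) p) \<longlonglongrightarrow> 0"
  unfolding sign_rejection_prob_def
proof (rule binomial_prob_tendsto_0)
  define \<eta> where "\<eta> = min (p - r) (1 - r - p) / 2"
  show "0 \<le> p" "p \<le> 1" "0 < \<eta>"
    using assms r by (auto simp: \<eta>_def)
  have margins: "r + \<eta> \<le> p - \<eta>" "p + \<eta> \<le> 1 - r - \<eta>"
    by (auto simp: \<eta>_def)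
  show "\<forall>\<^sub>F n in sequentially.
          rejection_region n (k n) \<inter> {z. \<bar>real z - real n * p\<bar> < real n * \<eta>} = {}"
    using critical_value_upper[OF \<open>0 < \<eta>\<close>]
  proof eventually_elim
    case (elim n)
    have "real n * (r + \<eta>) \<le> real n * (p - \<eta>)" "real n * (p + \<eta>) \<le> real n * (1 - r - \<eta>)"
      using margins by (auto intro: mult_left_mono)
    moreover have "real n - real (k n) \<le> real (n - k n)"
      by linarith
    ultimately have "\<not> \<bar>real z - real n * p\<bar> < real n * \<eta>" if "z \<in> rejection_region n (k n)" for z
      using that elim unfolding rejection_region_def abs_less_iff
      by (auto simp: algebra_simps)
    then show ?case
      by blast
  qed
qed

lemma sign_rejection_prob_tendsto_1_iff:
  assumes "0 \<le> p" "p \<le> 1"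
  shows "(\<lambda>n. sign_rejection_prob n (k n) p) \<longlonglongrightarrow> 1 \<longleftrightarrow> p < r \<or> 1 - r < p"
proof -
  have flip: "sign_rejection_prob n (k n) (1 - p) = sign_rejection_prob n (k n) p" for n
    using sign_rejection_prob_flip assms by simp
  consider "p < r" | "1 - r < p" | "p = r \<or> p = 1 - r" | "r < p" "p < 1 - r"
    by linarith
  then show ?thesis
  proof cases
    case 1
    then show ?thesis
      using sign_rejection_prob_tendsto_1 assms by simp
  next
    case 2
    then show ?thesis
      using sign_rejection_prob_tendsto_1[of "1 - p"] assms by (simp add: flip)
  next
    case 3
    then have "(\<lambda>n. sign_rejection_prob n (k n) p) \<longlonglongrightarrow> \<alpha>"
    proof
      assume "p = 1 - r"
      then have "sign_rejection_prob n (k n) p = sign_rejection_prob n (k n) r" for n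
        using flip[of n] by simp
      then show ?thesis
        using size_tendsto_alpha by simp
    qed (use size_tendsto_alpha in simp)
    then have "\<not> (\<lambda>n. sign_rejection_prob n (k n) p) \<longlonglongrightarrow> 1"
      using LIMSEQ_unique \<alpha> by force
    with 3 r show ?thesis
      by auto
  next
    case 4
    then have "\<not> (\<lambda>n. sign_rejection_prob n (k n) p) \<longlonglongrightarrow> 1"
      using sign_rejection_prob_tendsto_0 LIMSEQ_unique zero_neq_one by metis
    with 4 show ?thesis
      by auto
  qed
qed



lemma contamination_rejects_iff:
  assumes F: "is_distribution_function F" and \<delta>: "0 \<le> \<delta>" "\<delta> \<le> 1"
  shows "(\<forall>G\<in>contam_nbhd \<delta> (shift_df F l). reject_prob (sign_test \<theta>0 k) G \<longlonglongrightarrow> 1)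
     \<longleftrightarrow> 1 - r < (1 - \<delta>) * max (F (\<theta>0 - l)) (1 - F (\<theta>0 - l))"
proof -
  let ?N = "contam_nbhd \<delta> (shift_df F l)"
  have df: "is_distribution_function G" if "G \<in> ?N" for G
    using contam_nbhd_is_distribution_function[OF is_distribution_function_shift[OF F] \<delta> that] .
  have "reject_prob (sign_test \<theta>0 k) G \<longlonglongrightarrow> 1 \<longleftrightarrow> G \<theta>0 < r \<or> 1 - r < G \<theta>0" if "G \<in> ?N" for G
  proof -
    have "reject_prob (sign_test \<theta>0 k) G = (\<lambda>n. sign_rejection_prob n (k n) (1 - G \<theta>0))"
      using reject_prob_sign_test[OF df[OF that]] by auto
    moreover have "0 \<le> G \<theta>0" "G \<theta>0 \<le> 1"
      using is_distribution_function_bounded[OF df[OF that]] by auto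
    ultimately show ?thesis
      by (simp add: sign_rejection_prob_tendsto_1_iff) linarith
  qed
  then have "(\<forall>G\<in>?N. reject_prob (sign_test \<theta>0 k) G \<longlonglongrightarrow> 1)
      \<longleftrightarrow> (\<forall>g\<in>(\<lambda>G. G \<theta>0) ` ?N. g < r \<or> 1 - r < g)"
    by simp
  also have "\<dots> \<longleftrightarrow> (\<forall>h\<in>{0..1}. (1 - \<delta>) * F (\<theta>0 - l) + \<delta> * h < r \<or> 1 - r < (1 - \<delta>) * F (\<theta>0 - l) + \<delta> * h)"
    by (simp add: contam_nbhd_values_at shift_df_def)
  also have "\<dots> \<longleftrightarrow> 1 - r < (1 - \<delta>) * max (F (\<theta>0 - l)) (1 - F (\<theta>0 - l))"
    using \<delta> r by (intro band_avoided_by_mixtures_iff) auto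
  finally show ?thesis .
qed

lemma robust_power_K_iff:
  assumes F: "is_distribution_function F" and symm: "\<And>t. F (\<theta>0 + t) + F (\<theta>0 - t) = 1"
    and \<delta>: "0 \<le> \<delta>" "\<delta> \<le> 1"
  shows "robust_power_K (sign_test \<theta>0 k) F \<delta> K \<longleftrightarrow> (\<forall>t\<ge>0. K < t \<longrightarrow> 1 - r < (1 - \<delta>) * F (\<theta>0 + t))"
proof -
  have "mono F"
    using F by (simp add: is_distribution_function_def)
  then have "robust_power_K (sign_test \<theta>0 k) F \<delta> K
      \<longleftrightarrow> (\<forall>l. K < \<bar>l\<bar> \<longrightarrow> 1 - r < (1 - \<delta>) * F (\<theta>0 + \<bar>l\<bar>))"
    unfolding robust_power_K_def
    by (simp add: contamination_rejects_iff[OF F \<delta>] symmetric_df_max_eq[OF _ symm])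
  also have "\<dots> \<longleftrightarrow> (\<forall>t\<ge>0. K < t \<longrightarrow> 1 - r < (1 - \<delta>) * F (\<theta>0 + t))"
    by (metis abs_ge_zero abs_of_nonneg)
  finally show ?thesis .
qed

lemma has_robust_power_iff:
  assumes F: "is_distribution_function F" and symm: "\<And>t. F (\<theta>0 + t) + F (\<theta>0 - t) = 1"
    and \<delta>: "0 \<le> \<delta>" "\<delta> \<le> 1"
  shows "has_robust_power (sign_test \<theta>0 k) F \<delta> \<longleftrightarrow> \<delta> < r"
proof
  assume "has_robust_power (sign_test \<theta>0 k) F \<delta>"
  then obtain K where "\<forall>t\<ge>0. K < t \<longrightarrow> 1 - r < (1 - \<delta>) * F (\<theta>0 + t)"
    by (auto simp: has_robust_power_def robust_power_K_iff[OF F symm \<delta>])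
  then have "1 - r < (1 - \<delta>) * F (\<theta>0 + (max K 0 + 1))"
    by auto
  also have "\<dots> \<le> 1 - \<delta>"
    using is_distribution_function_bounded[OF F] \<delta> by (simp add: mult_left_le)
  finally show "\<delta> < r"
    by simp
next
  assume "\<delta> < r"
  then have "(1 - r) / (1 - \<delta>) < 1"
    using r by simp
  moreover have "(F \<longlongrightarrow> 1) at_top"
    using F by (simp add: is_distribution_function_def)
  ultimately have "\<forall>\<^sub>F x in at_top. (1 - r) / (1 - \<delta>) < F x"
    by (simp add: order_tendstoD)
  then obtain T where T: "\<And>x. T \<le> x \<Longrightarrow> (1 - r) / (1 - \<delta>) < F x"
    by (auto simp: eventually_at_top_linorder)
  have "1 - r < (1 - \<delta>) * F (\<theta>0 + t)" if "T - \<theta>0 < t" for t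
    using T[of "\<theta>0 + t"] that \<open>\<delta> < r\<close> r by (simp add: pos_divide_less_eq mult.commute)
  then show "has_robust_power (sign_test \<theta>0 k) F \<delta>"
    unfolding has_robust_power_def robust_power_K_iff[OF F symm \<delta>] by blast
qed

lemma consistency_distance_sign_test:
  assumes F: "is_distribution_function F" "continuous_on UNIV F"
    and strict: "\<And>a b. a < b \<Longrightarrow> 0 < F a \<Longrightarrow> F b < 1 \<Longrightarrow> F a < F b"
    and symm: "\<And>t. F (\<theta>0 + t) + F (\<theta>0 - t) = 1"
    and \<delta>: "0 \<le> \<delta>" "\<delta> < r"
  shows "consistency_distance (sign_test \<theta>0 k) F \<delta> = quantile F ((1 - r) / (1 - \<delta>)) - \<theta>0"
proof -
  define q where "q = (1 - r) / (1 - \<delta>)"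
  have "1 - \<delta> > 0"
    using \<delta> r by simp
  then have q: "0 < q" "q < 1" "1/2 \<le> q"
    and threshold: "\<And>y. 1 - r < (1 - \<delta>) * y \<longleftrightarrow> q < y"
    using \<delta> r by (auto simp: q_def field_simps)
  note quantile_iff = quantile_less_iff[OF F q(1,2) strict]
  have "F \<theta>0 = 1/2"
    using symm[of 0] by simp
  then have "\<theta>0 \<le> quantile F q"
    using quantile_iff[of \<theta>0] q by linarith
  have "1 - r < (1 - \<delta>) * F (\<theta>0 + t) \<longleftrightarrow> quantile F q - \<theta>0 < t" for t
    using threshold[of "F (\<theta>0 + t)"] quantile_iff[of "\<theta>0 + t"] by linarith
  then have "robust_power_K (sign_test \<theta>0 k) F \<delta> K
      \<longleftrightarrow> (\<forall>t\<ge>0. K < t \<longrightarrow> quantile F q - \<theta>0 < t)" for K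
    using \<delta> r by (simp add: robust_power_K_iff[OF F(1) symm])
  then have "{K. robust_power_K (sign_test \<theta>0 k) F \<delta> K} = {K. \<forall>t\<ge>0. K < t \<longrightarrow> quantile F q - \<theta>0 < t}"
    by simp
  also have "\<dots> = {quantile F q - \<theta>0..}"
    by (rule threshold_set_eq_atLeast) (use \<open>\<theta>0 \<le> quantile F q\<close> in auto)
  finally show ?thesis
    by (simp add: consistency_distance_def q_def)
qed

lemma power_breakdown_sign_test:
  assumes F: "is_distribution_function F" and symm: "\<And>t. F (\<theta>0 + t) + F (\<theta>0 - t) = 1"
  shows "power_breakdown (sign_test \<theta>0 k) F = r"
proof -
  have "{\<delta>. 0 \<le> \<delta> \<and> \<delta> < 1/2 \<and> has_robust_power (sign_test \<theta>0 k) F \<delta>} = {0..<r}"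
    using has_robust_power_iff[OF F symm] r by auto
  then show ?thesis
    using r by (simp add: power_breakdown_def)
qed

end

theorem theorem3:
  fixes F f :: "real \<Rightarrow> real" and \<theta>0 \<alpha> \<epsilon> :: real and k :: "nat \<Rightarrow> nat"
  assumes dfF: "is_distribution_function F"
    and contF: "continuous_on UNIV F"
    and dens_nonneg: "\<And>x. f x \<ge> 0"
    and dens_int: "integrable lborel f"
    and dens: "\<And>x. F x = (\<integral>t. indicator {..x} t * f t \<partial>lborel)"
    and symm: "\<And>t. f (\<theta>0 + t) = f (\<theta>0 - t)"
    and unimodal: "\<exists>m. mono_on {..m} f \<and> antimono_on {m..} f"
    and alpha: "0 < \<alpha>" "\<alpha> < 1"
    and eps: "0 \<le> \<epsilon>" "\<epsilon> < 1/2"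
    and kn: "\<And>n j. \<bar>alpha_star n (k n) \<epsilon> - \<alpha>\<bar> \<le> \<bar>alpha_star n j \<epsilon> - \<alpha>\<bar>"
  shows "(\<forall>\<delta>. 0 \<le> \<delta> \<and> \<delta> < (1 - \<epsilon>) / 2 \<longrightarrow>
            consistency_distance (sign_test \<theta>0 k) F \<delta>
              = quantile F ((1 + \<epsilon>) / (2 * (1 - \<delta>))) - \<theta>0)
         \<and> power_breakdown (sign_test \<theta>0 k) F = (1 - \<epsilon>) / 2
         \<and> (has_robust_power (sign_test \<theta>0 k) F \<epsilon> \<longleftrightarrow> \<epsilon> < 1/3)"
proof -
  define r where "r = (1 - \<epsilon>) / 2"
  have r: "0 < r" "r \<le> 1/2"
    using eps by (simp_all add: r_def)
  have k_opt: "\<And>n j. \<bar>sign_rejection_prob n (k n) r - \<alpha>\<bar> \<le> \<bar>sign_rejection_prob n j r - \<alpha>\<bar>"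
    using kn by (simp add: r_def alpha_star_eq_sign_rejection_prob)
  have symmF: "\<And>t. F (\<theta>0 + t) + F (\<theta>0 - t) = 1"
    using symmetric_density_df[OF dfF dens_nonneg dens_int dens symm] .
  have strict: "\<And>a b. a < b \<Longrightarrow> 0 < F a \<Longrightarrow> F b < 1 \<Longrightarrow> F a < F b"
    using unimodal_density_df_strict_mono[OF dfF dens_nonneg dens_int dens unimodal] .
  have "1 - r = (1 + \<epsilon>) / 2"
    by (simp add: r_def field_simps)
  then have level: "(1 + \<epsilon>) / (2 * (1 - \<delta>)) = (1 - r) / (1 - \<delta>)" for \<delta>
    by (simp only: divide_divide_eq_left)
  show ?thesis
  proof (intro conjI allI impI)
    fix \<delta> assume "0 \<le> \<delta> \<and> \<delta> < (1 - \<epsilon>) / 2"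
    then have "0 \<le> \<delta>" "\<delta> < r"
      by (auto simp: r_def)
    from consistency_distance_sign_test[OF r alpha k_opt dfF contF strict symmF this]
    show "consistency_distance (sign_test \<theta>0 k) F \<delta> = quantile F ((1 + \<epsilon>) / (2 * (1 - \<delta>))) - \<theta>0"
      by (simp only: level)
  next
    show "power_breakdown (sign_test \<theta>0 k) F = (1 - \<epsilon>) / 2"
      using power_breakdown_sign_test[OF r alpha k_opt dfF symmF] by (simp add: r_def)
  next
    show "has_robust_power (sign_test \<theta>0 k) F \<epsilon> \<longleftrightarrow> \<epsilon> < 1/3"
      using has_robust_power_iff[OF r alpha k_opt dfF symmF, of \<epsilon>] eps by (auto simp: r_def)
  qed
qed

end
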